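(* Let $\|\cdot\|_\alpha$ be a submultiplicative norm belonging to a dimension-invariant family of matrix norms, and let $A$ be an $n\times n$ block strongly nonsingular matrix with blocking $\mathcal{I}$ having $n_t$ blocks. Then $$\rho^{\mathcal{I}}_\alpha(A)\le 1+\max_{1\le k\le n_t-1}\Big[\|A_{1:k,1:k}^{-1}\|_\alpha\min\big(\|A_{k+1:n_t,1:k}\|_\alpha,\|A_{1:k,k+1:n_t}\|_\alpha\big)\Big]\le 1+\max_{1\le k\le n_t-1}\|A_{1:k,1:k}^{-1}\|_\alpha\|A\|_\alpha.$$
   Context: A dimension-invariant family of matrix norms is a choice of norm for matrices of every size such that for every matrix $B$ and every partition of its rows and columns into contiguous blocks $B_{i,j}$, $\max_{i,j}\|B_{i,j}\|\le\|B\|\le\sum_{i,j}\|B_{i,j}\|$. Submultiplicative: $\|BC\|\le\|B\|\|C\|$ for all conformal $B,C$. Blocking: a strictly increasing list $\mathcal{I}=[1=\mathcal{I}_1<\dots<\mathcal{I}_{n_t+1}=n+1]$; $A_{i,j}=A[\mathcal{I}_i:\mathcal{I}_{i+1}-1,\ \mathcal{I}_j:\mathcal{I}_{j+1}-1]$ and $A_{i:j,k:l}$ is the corresponding range of blocks. Block strongly nonsingular: every $A_{1:k,1:k}$ is nonsingular. Block Schur complements: $A^{(1)}=A$, $A^{(k+1)}=A^{(k)}_{k+1:n_t,k+1:n_t}-A^{(k)}_{k+1:n_t,k}(A^{(k)}_{k,k})^{-1}A^{(k)}_{k,k+1:n_t}$. Block growth factor: $\rho^{\mathcal{I}}_\alpha(A)=\max_{1\le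 k\le n_t}\|A^{(k)}\|_\alpha/\|A\|_\alpha$. *)

theory Defs
  imports "Jordan_Normal_Form.Matrix"
begin

text \<open>Matrices are Jordan_Normal_Form matrices over a real normed field (covers real and complex).
  All indices are 0-based.\<close>

definition subm :: "'a mat \<Rightarrow> nat \<Rightarrow> nat \<Rightarrow> nat \<Rightarrow> nat \<Rightarrow> 'a mat" where
  "subm A r0 r1 c0 c1 = mat (r1 - r0) (c1 - c0) (\<lambda>(i, j). A $$ (r0 + i, c0 + j))"

definition minv :: "'a :: field mat \<Rightarrow> 'a mat" where
  "minv A = (if invertible_mat A
     then (SOME B. B \<in> carrier_mat (dim_row A) (dim_row A) \<and> A * B = 1\<^sub>m (dim_row A) \<and> B * A = 1\<^sub>m (dim_row A))
     else 0\<^sub>m (dim_row A) (dim_row A))"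

text \<open>A blocking of size n: strictly increasing list I with I!0 = 0 and last I = n.
  It has n_t = length I - 1 \<ge> 1 blocks; block i (0-based) is the index range I!i ..< I!(i+1).\<close>
definition blocking :: "nat list \<Rightarrow> nat \<Rightarrow> bool" where
  "blocking I n \<longleftrightarrow> length I \<ge> 2 \<and> sorted_wrt (<) I \<and> I ! 0 = 0 \<and> last I = n"

definition nblocks :: "nat list \<Rightarrow> nat" where
  "nblocks I = length I - 1"

definition blk :: "nat list \<Rightarrow> 'a mat \<Rightarrow> nat \<Rightarrow> nat \<Rightarrow> nat \<Rightarrow> nat \<Rightarrow> 'a mat" where
  "blk I A i j k l = subm A (I ! i) (I ! j) (I ! k) (I ! l)"

definition block_strongly_nonsingular :: "nat list \<Rightarrow> 'a :: field mat \<Rightarrow> bool" where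
  "block_strongly_nonsingular I A \<longleftrightarrow>
     (\<forall>k \<in> {1..nblocks I}. invertible_mat (blk I A 0 k 0 k))"

text \<open>Block Schur complements: schur I A k (0-based k) is the paper's A^(k+1);
  it is the square matrix indexed by the original rows/columns I!k ..< n.\<close>
fun schur :: "nat list \<Rightarrow> 'a :: field mat \<Rightarrow> nat \<Rightarrow> 'a mat" where
  "schur I A 0 = A"
| "schur I A (Suc k) =
    (let S = schur I A k; m = dim_row S; d = I ! Suc k - I ! k
     in subm S d m d m - subm S d m 0 d * minv (subm S 0 d 0 d) * subm S 0 d d m)"

definition growth_factor :: "('a mat \<Rightarrow> real) \<Rightarrow> nat list \<Rightarrow> 'a :: field mat \<Rightarrow> real" where
  "growth_factor nrm I A = Max ((\<lambda>k. nrm (schur I A k) / nrm A) ` {..<nblocks I})"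

definition matrix_norm_family :: "('a :: real_normed_field mat \<Rightarrow> real) \<Rightarrow> bool" where
  "matrix_norm_family nrm \<longleftrightarrow>
    (\<forall>m n. \<forall>A \<in> carrier_mat m n. \<forall>B \<in> carrier_mat m n. \<forall>c.
        nrm A \<ge> 0 \<and> (nrm A = 0 \<longleftrightarrow> A = 0\<^sub>m m n) \<and>
        nrm (c \<cdot>\<^sub>m A) = norm c * nrm A \<and> nrm (A + B) \<le> nrm A + nrm B)"

definition dimension_invariant :: "('a :: real_normed_field mat \<Rightarrow> real) \<Rightarrow> bool" where
  "dimension_invariant nrm \<longleftrightarrow> matrix_norm_family nrm \<and>
    (\<forall>m n B R C. B \<in> carrier_mat m n \<longrightarrow> blocking R m \<longrightarrow> blocking C n \<longrightarrow>
       (\<forall>i < nblocks R. \<forall>j < nblocks C.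
          nrm (subm B (R ! i) (R ! Suc i) (C ! j) (C ! Suc j)) \<le> nrm B) \<and>
       nrm B \<le> (\<Sum>i < nblocks R. \<Sum>j < nblocks C.
                   nrm (subm B (R ! i) (R ! Suc i) (C ! j) (C ! Suc j))))"

definition submultiplicative :: "('a :: real_normed_field mat \<Rightarrow> real) \<Rightarrow> bool" where
  "submultiplicative nrm \<longleftrightarrow>
    (\<forall>m k n A B. A \<in> carrier_mat m k \<longrightarrow> B \<in> carrier_mat k n \<longrightarrow> nrm (A * B) \<le> nrm A * nrm B)"

end

theory Submission
  imports Defs "Jordan_Normal_Form.Determinant"
begin

(* Write A = [A11 A12; A21 A22] with A11 = A_{1:k,1:k}. By the quotient property
   of Schur complements, the block Schur complement produced after k elimination steps is the
   Schur complement A22 - A21 A11^-1 A12 of A11 in A itself. Dimension invariance bounds each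
   of A12, A21, A22 by ||A||, so the triangle inequality and submultiplicativity give
   ||A22 - A21 A11^-1 A12|| <= ||A|| + ||A11^-1|| ||A21|| ||A12||
                            <= ||A|| (1 + ||A11^-1|| min(||A21||, ||A12||)).
   The quotient property follows from the characterisation "S w = y whenever A (x; w) = (0; y)"
   of the Schur complement S, applied to A and to its first Schur complement. *)

lemma subm_in_carrier_mat_iff [simp]:
  "subm A r0 r1 c0 c1 \<in> carrier_mat m n \<longleftrightarrow> m = r1 - r0 \<and> n = c1 - c0"
  by (auto simp: subm_def)

lemma dim_subm [simp]:
  "dim_row (subm A r0 r1 c0 c1) = r1 - r0" "dim_col (subm A r0 r1 c0 c1) = c1 - c0"
  by (simp_all add: subm_def)

lemma index_subm [simp]:
  "i < r1 - r0 \<Longrightarrow> j < c1 - c0 \<Longrightarrow> subm A r0 r1 c0 c1 $$ (i, j) = A $$ (r0 + i, c0 + j)"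
  by (simp add: subm_def)

lemma subm_full: "A \<in> carrier_mat m n \<Longrightarrow> subm A 0 m 0 n = A"
  by (intro eq_matI) auto

lemma subm_subm:
  "b' \<le> b - a \<Longrightarrow> d' \<le> d - c \<Longrightarrow>
   subm (subm A a b c d) a' b' c' d' = subm A (a + a') (a + b') (c + c') (c + d')"
  by (intro eq_matI) (auto simp: add.assoc)

lemma subm_minus:
  "r1 \<le> dim_row B \<Longrightarrow> c1 \<le> dim_col B \<Longrightarrow>
   subm (A - B) r0 r1 c0 c1 = subm A r0 r1 c0 c1 - subm B r0 r1 c0 c1"
  by (intro eq_matI) auto

lemma subm_mult:
  assumes "X \<in> carrier_mat m k" "Y \<in> carrier_mat k n" "r1 \<le> m" "c1 \<le> n"
  shows "subm (X * Y) r0 r1 c0 c1 = subm X r0 r1 0 k * subm Y 0 k c0 c1"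
  using assms by (intro eq_matI) (auto simp: scalar_prod_def)

lemma four_block_subm:
  assumes "A \<in> carrier_mat m n" "p \<le> m" "q \<le> n"
  shows "four_block_mat (subm A 0 p 0 q) (subm A 0 p q n) (subm A p m 0 q) (subm A p m q n) = A"
  using assms by (intro eq_matI) auto

lemma mult_append_vec_subm:
  assumes A: "A \<in> carrier_mat m n" and "p \<le> m" "q \<le> n"
    and x: "x \<in> carrier_vec q" and w: "w \<in> carrier_vec (n - q)"
  shows "A *\<^sub>v (x @\<^sub>v w) =
    (subm A 0 p 0 q *\<^sub>v x + subm A 0 p q n *\<^sub>v w) @\<^sub>v (subm A p m 0 q *\<^sub>v x + subm A p m q n *\<^sub>v w)"
proof -
  have "A *\<^sub>v (x @\<^sub>v w) = four_block_mat (subm A 0 p 0 q) (subm A 0 p q n) (subm A p m 0 q) (subm A p m q n)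
      *\<^sub>v (x @\<^sub>v w)"
    using four_block_subm[OF assms(1-3)] by simp
  also have "\<dots> = (subm A 0 p 0 q *\<^sub>v x + subm A 0 p q n *\<^sub>v w) @\<^sub>v
      (subm A p m 0 q *\<^sub>v x + subm A p m q n *\<^sub>v w)"
    by (rule four_block_mat_mult_vec) (use x w in auto)
  finally show ?thesis .
qed

lemma append_vec_assoc: "(x @\<^sub>v y) @\<^sub>v z = x @\<^sub>v (y @\<^sub>v z)"
  by (intro eq_vecI) auto

lemma append_zero_vec: "0\<^sub>v p @\<^sub>v 0\<^sub>v q = (0\<^sub>v (p + q) :: 'a :: zero vec)"
  by (intro eq_vecI) auto

lemma eq_mat_if_mult_vec_eq:
  assumes "A \<in> carrier_mat m n" "B \<in> carrier_mat m n"
    and "\<And>v. v \<in> carrier_vec n \<Longrightarrow> A *\<^sub>v v = B *\<^sub>v (v :: 'a :: semiring_1 vec)"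
  shows "A = B"
proof (rule eq_matI)
  fix i j assume "i < dim_row B" "j < dim_col B"
  moreover have "(A *\<^sub>v unit_vec n j) $ i = (B *\<^sub>v unit_vec n j) $ i"
    using assms(3)[of "unit_vec n j"] by simp
  ultimately show "A $$ (i, j) = B $$ (i, j)" using assms(1,2) by simp
qed (use assms in auto)

lemma minv_inverse:
  fixes M :: "'a :: field mat"
  assumes M: "M \<in> carrier_mat n n" and inv: "invertible_mat M"
  shows "minv M \<in> carrier_mat n n" "M * minv M = 1\<^sub>m n" "minv M * M = 1\<^sub>m n"
proof -
  obtain B where B: "inverts_mat M B" "inverts_mat B M"
    using inv unfolding invertible_mat_def by auto
  have "B \<in> carrier_mat n n"
    using B M unfolding inverts_mat_def by (metis carrier_matD carrier_matI index_mult_mat(3) index_one_mat(3))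
  then have ex: "\<exists>B. B \<in> carrier_mat (dim_row M) (dim_row M) \<and> M * B = 1\<^sub>m (dim_row M) \<and> B * M = 1\<^sub>m (dim_row M)"
    using B M unfolding inverts_mat_def by auto
  then have "minv M \<in> carrier_mat (dim_row M) (dim_row M) \<and> M * minv M = 1\<^sub>m (dim_row M) \<and> minv M * M = 1\<^sub>m (dim_row M)"
    using someI_ex[OF ex] inv unfolding minv_def by simp
  then show "minv M \<in> carrier_mat n n" "M * minv M = 1\<^sub>m n" "minv M * M = 1\<^sub>m n"
    using M by auto
qed

lemma minv_carrier_mat:
  assumes "M \<in> carrier_mat n n"
  shows "minv M \<in> carrier_mat n n"
proof (cases "invertible_mat M")
  case True
  then show ?thesis using minv_inverse(1)[OF assms] by simp
next
  case False
  then show ?thesis using assms by (simp add: minv_def)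
qed

lemma invertible_mat_mult_vec_cancel:
  fixes M :: "'a :: field mat"
  assumes M: "M \<in> carrier_mat n n" "invertible_mat M" and "x \<in> carrier_vec n" "y \<in> carrier_vec n"
    and "M *\<^sub>v x = M *\<^sub>v y"
  shows "x = y"
proof -
  note E = minv_inverse[OF M]
  have "x = (minv M * M) *\<^sub>v x" using E assms(3) by simp
  also have "\<dots> = (minv M * M) *\<^sub>v y" using E M assms(3-5) by (metis assoc_mult_mat_vec)
  also have "\<dots> = y" using E assms(4) by simp
  finally show ?thesis .
qed

lemma invertible_mat_if_mult_vec_inj:
  fixes M :: "'a :: field mat"
  assumes M: "M \<in> carrier_mat n n"
    and inj: "\<And>z. z \<in> carrier_vec n \<Longrightarrow> M *\<^sub>v z = 0\<^sub>v n \<Longrightarrow> z = 0\<^sub>v n"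
  shows "invertible_mat M"
proof -
  have "det M \<noteq> 0" using det_0_iff_vec_prod_zero_field[OF M] inj by auto
  then obtain B where "B \<in> carrier_mat n n" "B * M = 1\<^sub>m n" "M * B = 1\<^sub>m n"
    using det_non_zero_imp_unit[OF M, of "()"] unfolding Units_def ring_mat_def by auto
  then show ?thesis
    using M unfolding invertible_mat_def inverts_mat_def by auto
qed

definition schur_compl :: "'a :: field mat \<Rightarrow> nat \<Rightarrow> 'a mat" where
  "schur_compl A p = (let m = dim_row A in
     subm A p m p m - subm A p m 0 p * minv (subm A 0 p 0 p) * subm A 0 p p m)"

lemma schur_Suc: "schur I A (Suc k) = schur_compl (schur I A k) (I ! Suc k - I ! k)"
  by (simp add: schur_compl_def Let_def)

lemma schur_compl_carrier_mat: "A \<in> carrier_mat n n \<Longrightarrow> schur_compl A p \<in> carrier_mat (n - p) (n - p)"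
  by (intro carrier_matI) (simp_all add: schur_compl_def Let_def)

lemma schur_compl_solution:
  fixes A :: "'a :: field mat"
  assumes A: "A \<in> carrier_mat n n" and p: "p \<le> n" and inv: "invertible_mat (subm A 0 p 0 p)"
    and w: "w \<in> carrier_vec (n - p)"
  obtains x where "x \<in> carrier_vec p" "A *\<^sub>v (x @\<^sub>v w) = 0\<^sub>v p @\<^sub>v (schur_compl A p *\<^sub>v w)"
proof
  define A11 where "A11 = subm A 0 p 0 p"
  define A12 where "A12 = subm A 0 p p n"
  define A21 where "A21 = subm A p n 0 p"
  define A22 where "A22 = subm A p n p n"
  define E where "E = minv A11"
  have c: "A11 \<in> carrier_mat p p" "A12 \<in> carrier_mat p (n - p)"
    "A21 \<in> carrier_mat (n - p) p" "A22 \<in> carrier_mat (n - p) (n - p)"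
    unfolding A11_def A12_def A21_def A22_def by auto
  note E = minv_inverse[OF c(1) inv[folded A11_def], folded E_def]
  define x where "x = - (E *\<^sub>v (A12 *\<^sub>v w))"
  show x: "x \<in> carrier_vec p" using E c w unfolding x_def by auto
  have "A11 *\<^sub>v x = - ((A11 * E) *\<^sub>v (A12 *\<^sub>v w))"
    unfolding x_def using E c w by (subst assoc_mult_mat_vec) auto
  then have top: "A11 *\<^sub>v x + A12 *\<^sub>v w = 0\<^sub>v p"
    using E c w by (intro eq_vecI) auto
  have schur: "schur_compl A p = A22 - A21 * E * A12"
    using A unfolding schur_compl_def A11_def A12_def A21_def A22_def E_def by simp
  have "A21 *\<^sub>v x = - ((A21 * E * A12) *\<^sub>v w)"
    unfolding x_def using E c w by (subst assoc_mult_mat_vec) auto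
  then have bottom: "A21 *\<^sub>v x + A22 *\<^sub>v w = schur_compl A p *\<^sub>v w"
    unfolding schur using E c w by (intro eq_vecI) (auto simp: minus_mult_distrib_mat_vec)
  show "A *\<^sub>v (x @\<^sub>v w) = 0\<^sub>v p @\<^sub>v (schur_compl A p *\<^sub>v w)"
    using mult_append_vec_subm[OF A p p x w] top bottom
    unfolding A11_def A12_def A21_def A22_def by simp
qed

lemma schur_compl_mult_vec:
  fixes A :: "'a :: field mat"
  assumes A: "A \<in> carrier_mat n n" and p: "p \<le> n" and inv: "invertible_mat (subm A 0 p 0 p)"
    and x: "x \<in> carrier_vec p" and w: "w \<in> carrier_vec (n - p)"
    and eq: "A *\<^sub>v (x @\<^sub>v w) = 0\<^sub>v p @\<^sub>v y"
  shows "schur_compl A p *\<^sub>v w = y"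
proof -
  obtain x' where x': "x' \<in> carrier_vec p" "A *\<^sub>v (x' @\<^sub>v w) = 0\<^sub>v p @\<^sub>v (schur_compl A p *\<^sub>v w)"
    using schur_compl_solution[OF A p inv w] .
  have top: "subm A 0 p 0 p *\<^sub>v u = - (subm A 0 p p n *\<^sub>v w)"
    if "u \<in> carrier_vec p" "A *\<^sub>v (u @\<^sub>v w) = 0\<^sub>v p @\<^sub>v v" for u v
  proof -
    have "subm A 0 p 0 p *\<^sub>v u + subm A 0 p p n *\<^sub>v w \<in> carrier_vec p"
      by (intro carrier_vecI) simp
    from append_vec_eq[OF this zero_carrier_vec]
    have sum: "subm A 0 p 0 p *\<^sub>v u + subm A 0 p p n *\<^sub>v w = 0\<^sub>v p"
      using that mult_append_vec_subm[OF A p p that(1) w] by simp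
    show ?thesis
    proof (intro eq_vecI)
      fix i assume "i < dim_vec (- (subm A 0 p p n *\<^sub>v w))"
      with arg_cong[OF sum, of "\<lambda>v. v $ i"] show "(subm A 0 p 0 p *\<^sub>v u) $ i = (- (subm A 0 p p n *\<^sub>v w)) $ i"
        by (simp add: eq_neg_iff_add_eq_0)
    qed simp
  qed
  have "subm A 0 p 0 p *\<^sub>v x = subm A 0 p 0 p *\<^sub>v x'"
    using top[OF x eq] top[OF x'] by simp
  then have "x = x'"
    using invertible_mat_mult_vec_cancel[OF _ inv] x x'(1) by simp
  then have "0\<^sub>v p @\<^sub>v y = 0\<^sub>v p @\<^sub>v (schur_compl A p *\<^sub>v w)"
    using eq x'(2) by simp
  then show ?thesis by (subst (asm) append_vec_eq[of _ p]) auto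
qed

lemma invertible_schur_compl:
  fixes M :: "'a :: field mat"
  assumes M: "M \<in> carrier_mat n n" "invertible_mat M"
    and p: "p \<le> n" and inv: "invertible_mat (subm M 0 p 0 p)"
  shows "invertible_mat (schur_compl M p)"
proof (rule invertible_mat_if_mult_vec_inj[OF schur_compl_carrier_mat[OF M(1)]])
  fix z assume z: "z \<in> carrier_vec (n - p)" and "schur_compl M p *\<^sub>v z = 0\<^sub>v (n - p)"
  moreover obtain x where x: "x \<in> carrier_vec p" "M *\<^sub>v (x @\<^sub>v z) = 0\<^sub>v p @\<^sub>v (schur_compl M p *\<^sub>v z)"
    using schur_compl_solution[OF M(1) p inv z] .
  moreover have "M *\<^sub>v 0\<^sub>v n = 0\<^sub>v n"
    using M(1) by (intro eq_vecI) auto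
  ultimately have "M *\<^sub>v (x @\<^sub>v z) = M *\<^sub>v (0\<^sub>v p @\<^sub>v 0\<^sub>v (n - p))"
    using p by (simp add: append_zero_vec)
  then have "x @\<^sub>v z = 0\<^sub>v p @\<^sub>v 0\<^sub>v (n - p)"
    using invertible_mat_mult_vec_cancel[OF M] x(1) z p
    by (metis append_carrier_vec le_add_diff_inverse zero_carrier_vec)
  then show "z = 0\<^sub>v (n - p)" using x(1) by simp
qed

lemma subm_schur_compl:
  fixes A :: "'a :: field mat"
  assumes A: "A \<in> carrier_mat n n" and pq: "p \<le> q" "q \<le> n"
  shows "subm (schur_compl A p) 0 (q - p) 0 (q - p) = schur_compl (subm A 0 q 0 q) p"
proof -
  have E: "minv (subm A 0 p 0 p) \<in> carrier_mat p p"
    by (intro minv_carrier_mat carrier_matI) simp_all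
  have "subm (subm A p n 0 p * minv (subm A 0 p 0 p) * subm A 0 p p n) 0 (q - p) 0 (q - p)
      = subm (subm A p n 0 p * minv (subm A 0 p 0 p)) 0 (q - p) 0 p * subm (subm A 0 p p n) 0 p 0 (q - p)"
    using E pq by (intro subm_mult[where m = "n - p" and n = "n - p"]) auto
  also have "subm (subm A p n 0 p * minv (subm A 0 p 0 p)) 0 (q - p) 0 p
      = subm (subm A p n 0 p) 0 (q - p) 0 p * minv (subm A 0 p 0 p)"
    using E pq by (simp add: subm_mult[where m = "n - p" and k = p and n = p] subm_full)
  finally show ?thesis
    using A pq unfolding schur_compl_def Let_def by (simp add: subm_minus subm_subm)
qed

lemma schur_compl_schur_compl:
  fixes A :: "'a :: field mat"
  assumes A: "A \<in> carrier_mat n n" and pq: "p \<le> q" "q \<le> n"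
    and inv_p: "invertible_mat (subm A 0 p 0 p)" and inv_q: "invertible_mat (subm A 0 q 0 q)"
  shows "schur_compl (schur_compl A p) (q - p) = schur_compl A q"
proof -
  define B where "B = schur_compl A p"
  define r where "r = q - p"
  have B: "B \<in> carrier_mat (n - p) (n - p)"
    unfolding B_def using schur_compl_carrier_mat[OF A] .
  have r: "r \<le> n - p" "n - p - r = n - q" "p + r = q" "r + (n - q) = n - p"
    using pq unfolding r_def by auto
  have inv_B: "invertible_mat (subm B 0 r 0 r)"
    unfolding B_def r_def subm_schur_compl[OF A pq]
    using pq inv_q inv_p by (intro invertible_schur_compl) (simp_all add: subm_subm)
  have "schur_compl B r *\<^sub>v y = schur_compl A q *\<^sub>v y" if y: "y \<in> carrier_vec (n - q)" for y
  proof -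
    obtain u where u: "u \<in> carrier_vec (p + r)" "A *\<^sub>v (u @\<^sub>v y) = 0\<^sub>v (p + r) @\<^sub>v (schur_compl A q *\<^sub>v y)"
      using schur_compl_solution[OF A pq(2) inv_q y] r(3) by metis
    define x where "x = vec_first u p"
    define z where "z = vec_last u r"
    have xz: "x \<in> carrier_vec p" "z \<in> carrier_vec r" "u = x @\<^sub>v z"
      using u(1) unfolding x_def z_def by auto
    have zy: "z @\<^sub>v y \<in> carrier_vec (n - p)"
      using xz(2) y r(4) by (metis append_carrier_vec)
    have "A *\<^sub>v (x @\<^sub>v (z @\<^sub>v y)) = 0\<^sub>v p @\<^sub>v (0\<^sub>v r @\<^sub>v schur_compl A q *\<^sub>v y)"
      using u(2) unfolding xz(3) append_vec_assoc append_zero_vec[symmetric] .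
    then have "B *\<^sub>v (z @\<^sub>v y) = 0\<^sub>v r @\<^sub>v schur_compl A q *\<^sub>v y"
      unfolding B_def using A pq inv_p xz(1) zy by (intro schur_compl_mult_vec) auto
    then show ?thesis
      using B r inv_B xz(2) y by (intro schur_compl_mult_vec[where n = "n - p"]) auto
  qed
  moreover have "schur_compl B r \<in> carrier_mat (n - q) (n - q)"
    using schur_compl_carrier_mat[OF B, of r] unfolding r(2) .
  ultimately show ?thesis
    unfolding B_def[symmetric] r_def[symmetric]
    using schur_compl_carrier_mat[OF A] by (intro eq_mat_if_mult_vec_eq) auto
qed

lemma blocking_nth:
  assumes "blocking I n"
  shows "I ! 0 = 0" "I ! nblocks I = n" "\<And>i j. i < j \<Longrightarrow> j \<le> nblocks I \<Longrightarrow> I ! i < I ! j"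
proof -
  have I: "length I \<ge> 2" "sorted_wrt (<) I" "I ! 0 = 0" "last I = n"
    using assms unfolding blocking_def by auto
  show "I ! 0 = 0" using I(3) .
  have "I \<noteq> []" using I(1) by auto
  then show "I ! nblocks I = n" using I(4) last_conv_nth[of I] unfolding nblocks_def by simp
  show "\<And>i j. i < j \<Longrightarrow> j \<le> nblocks I \<Longrightarrow> I ! i < I ! j"
    using I(1,2) sorted_wrt_nth_less[of "(<)" I] unfolding nblocks_def by auto
qed

lemma blocking_nblocks_ge_1: "blocking I n \<Longrightarrow> 1 \<le> nblocks I"
  unfolding blocking_def nblocks_def by auto

lemma schur_eq_schur_compl:
  fixes A :: "'a :: field mat"
  assumes A: "A \<in> carrier_mat n n" and I: "blocking I n" and nonsing: "block_strongly_nonsingular I A"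
    and k: "1 \<le> k" "k \<le> nblocks I"
  shows "schur I A k = schur_compl A (I ! k)"
  using k
proof (induction k rule: dec_induct)
  case base
  then show ?case using blocking_nth(1)[OF I] by (simp add: schur_Suc del: schur.simps(2))
next
  case (step j)
  have inv: "invertible_mat (subm A 0 (I ! i) 0 (I ! i))" if "1 \<le> i" "i \<le> nblocks I" for i
    using nonsing that blocking_nth(1)[OF I] unfolding block_strongly_nonsingular_def blk_def by auto
  have "I ! j < I ! Suc j"
    using blocking_nth(3)[OF I, of j "Suc j"] step.hyps k(2) by simp
  moreover have "I ! Suc j \<le> n"
    using blocking_nth(2)[OF I] blocking_nth(3)[OF I, of "Suc j" "nblocks I"] step.hyps k(2)
    by (cases "Suc j = nblocks I") auto
  ultimately show ?case
    using step schur_compl_schur_compl[OF A _ _ inv[of j] inv[of "Suc j"]] k(2)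
    by (simp add: schur_Suc del: schur.simps(2))
qed

lemma matrix_norm_nonneg: "matrix_norm_family nrm \<Longrightarrow> 0 \<le> nrm X"
  unfolding matrix_norm_family_def by (metis carrier_matI)

lemma matrix_norm_diff_le:
  fixes nrm :: "'a :: real_normed_field mat \<Rightarrow> real"
  assumes nrm: "matrix_norm_family nrm" and X: "X \<in> carrier_mat m n" and Y: "Y \<in> carrier_mat m n"
  shows "nrm (X - Y) \<le> nrm X + nrm Y"
proof -
  have "X - Y = X + (-1) \<cdot>\<^sub>m Y" using X Y by (intro eq_matI) auto
  also have "nrm \<dots> \<le> nrm X + nrm ((-1) \<cdot>\<^sub>m Y)"
    using nrm X Y unfolding matrix_norm_family_def by (meson smult_carrier_mat)
  also have "nrm ((-1) \<cdot>\<^sub>m Y) = nrm Y"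
    using nrm Y unfolding matrix_norm_family_def by fastforce
  finally show ?thesis .
qed

lemma mult_le_min_mult:
  fixes a b c :: "'a :: linordered_idom"
  assumes "0 \<le> a" "0 \<le> b" "a \<le> c" "b \<le> c"
  shows "a * b \<le> c * min a b"
proof (cases "a \<le> b")
  case True
  then show ?thesis using mult_left_mono[OF assms(4,1)] by (simp add: min_def mult.commute)
next
  case False
  then show ?thesis using mult_right_mono[OF assms(3,2)] by (simp add: min_def)
qed

lemma norm_quadrants_le:
  fixes nrm :: "'a :: real_normed_field mat \<Rightarrow> real"
  assumes nrm: "dimension_invariant nrm" and A: "A \<in> carrier_mat m n"
    and p: "0 < p" "p < m" and q: "0 < q" "q < n"
  shows "nrm (subm A 0 p 0 q) \<le> nrm A" "nrm (subm A 0 p q n) \<le> nrm A"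
    "nrm (subm A p m 0 q) \<le> nrm A" "nrm (subm A p m q n) \<le> nrm A"
proof -
  have "blocking [0, p, m] m" "blocking [0, q, n] n"
    using p q unfolding blocking_def by simp_all
  moreover have "nblocks [0, p, m] = 2" "nblocks [0, q, n] = 2"
    unfolding nblocks_def by simp_all
  ultimately have "nrm (subm A ([0, p, m] ! i) ([0, p, m] ! Suc i) ([0, q, n] ! j) ([0, q, n] ! Suc j)) \<le> nrm A"
    if "i < 2" "j < 2" for i j
    using nrm A that unfolding dimension_invariant_def by metis
  from this[of 0 0] this[of 0 1] this[of 1 0] this[of 1 1]
  show "nrm (subm A 0 p 0 q) \<le> nrm A" "nrm (subm A 0 p q n) \<le> nrm A"
    "nrm (subm A p m 0 q) \<le> nrm A" "nrm (subm A p m q n) \<le> nrm A"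
    by simp_all
qed

lemma norm_schur_compl_le:
  fixes nrm :: "'a :: real_normed_field mat \<Rightarrow> real"
  assumes nrm: "dimension_invariant nrm" "submultiplicative nrm"
    and A: "A \<in> carrier_mat n n" and p: "0 < p" "p < n"
  shows "nrm (schur_compl A p) \<le>
    nrm A * (1 + nrm (minv (subm A 0 p 0 p)) * min (nrm (subm A p n 0 p)) (nrm (subm A 0 p p n)))"
proof -
  define A12 where "A12 = subm A 0 p p n"
  define A21 where "A21 = subm A p n 0 p"
  define A22 where "A22 = subm A p n p n"
  define E where "E = minv (subm A 0 p 0 p)"
  have family: "matrix_norm_family nrm" using nrm(1) unfolding dimension_invariant_def by simp
  note nonneg = matrix_norm_nonneg[OF family]
  note quadrants = norm_quadrants_le[OF nrm(1) A p p]
  have c: "A12 \<in> carrier_mat p (n - p)" "A21 \<in> carrier_mat (n - p) p"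
    "A22 \<in> carrier_mat (n - p) (n - p)" "E \<in> carrier_mat p p"
    unfolding A12_def A21_def A22_def E_def by (auto intro: minv_carrier_mat)
  have "nrm (A21 * E * A12) \<le> nrm (A21 * E) * nrm A12"
    using nrm(2) c unfolding submultiplicative_def by (meson mult_carrier_mat)
  also have "\<dots> \<le> nrm A21 * nrm E * nrm A12"
    using nrm(2) c nonneg unfolding submultiplicative_def by (meson mult_right_mono)
  also have "\<dots> \<le> nrm E * (nrm A * min (nrm A21) (nrm A12))"
    using mult_left_mono[OF mult_le_min_mult[OF nonneg nonneg quadrants(3,2)] nonneg[of E]]
    unfolding A12_def A21_def by (simp add: ac_simps)
  finally have "nrm (A21 * E * A12) \<le> nrm E * (nrm A * min (nrm A21) (nrm A12))" .
  moreover have "nrm (schur_compl A p) \<le> nrm A22 + nrm (A21 * E * A12)"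
    using A c matrix_norm_diff_le[OF family c(3), of "A21 * E * A12"]
    unfolding schur_compl_def A12_def A21_def A22_def E_def by auto
  ultimately show ?thesis
    using quadrants(4) unfolding A12_def A21_def A22_def E_def by (simp add: algebra_simps)
qed

lemma Max_insert_image_mono:
  fixes f g :: "'b \<Rightarrow> 'a :: linorder"
  assumes "finite S" "\<And>k. k \<in> S \<Longrightarrow> f k \<le> g k"
  shows "Max (insert a (f ` S)) \<le> Max (insert a (g ` S))"
  using assms by (subst Max_le_iff) (auto intro: order.trans[OF _ Max_ge])

lemma growth_factor_le:
  assumes nonneg: "\<And>X. 0 \<le> nrm X" and I: "nblocks I \<ge> 1"
    and schur_le: "\<And>k. k \<in> {1..<nblocks I} \<Longrightarrow> nrm (schur I A k) \<le> nrm A * (1 + c k)"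
  shows "growth_factor nrm I A \<le> 1 + Max (insert 0 (c ` {1..<nblocks I}))"
  unfolding growth_factor_def
proof (rule Max.boundedI)
  let ?M = "Max (insert 0 (c ` {1..<nblocks I}))"
  have M: "0 \<le> ?M" "\<And>k. k \<in> {1..<nblocks I} \<Longrightarrow> c k \<le> ?M"
    by (rule Max_ge; simp)+
  fix r assume "r \<in> (\<lambda>k. nrm (schur I A k) / nrm A) ` {..<nblocks I}"
  then obtain k where k: "k < nblocks I" and r: "r = nrm (schur I A k) / nrm A" by blast
  show "r \<le> 1 + ?M"
  proof (cases "k = 0 \<or> nrm A = 0") \<comment> \<open>if nrm A = 0 then r = 0, as x / 0 = 0\<close>
    case True
    then have "r \<le> 1" unfolding r by auto
    then show ?thesis using M(1) by linarith
  next
    case False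
    then have "k \<in> {1..<nblocks I}" "0 < nrm A" using k nonneg[of A] by auto
    then have "r \<le> 1 + c k" unfolding r using schur_le by (simp add: pos_divide_le_eq mult.commute)
    then show ?thesis using M(2)[OF \<open>k \<in> _\<close>] by linarith
  qed
qed (use I in \<open>auto simp: lessThan_empty_iff\<close>)

theorem theorem2p2:
  fixes nrm :: "'a :: real_normed_field mat \<Rightarrow> real"
    and A :: "'a mat" and I :: "nat list" and n :: nat
  assumes "dimension_invariant nrm"
    and "submultiplicative nrm"
    and "A \<in> carrier_mat n n"
    and "blocking I n"
    and "block_strongly_nonsingular I A"
  shows "growth_factor nrm I A
           \<le> 1 + Max (insert 0 ((\<lambda>k. nrm (minv (blk I A 0 k 0 k)) *
                   min (nrm (blk I A k (nblocks I) 0 k)) (nrm (blk I A 0 k k (nblocks I))))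
                 ` {1..<nblocks I}))
       \<and> 1 + Max (insert 0 ((\<lambda>k. nrm (minv (blk I A 0 k 0 k)) *
                   min (nrm (blk I A k (nblocks I) 0 k)) (nrm (blk I A 0 k k (nblocks I))))
                 ` {1..<nblocks I}))
           \<le> 1 + Max (insert 0 ((\<lambda>k. nrm (minv (blk I A 0 k 0 k)) * nrm A) ` {1..<nblocks I}))"
proof -
  let ?S = "{1..<nblocks I}"
  let ?inv = "\<lambda>k. nrm (minv (blk I A 0 k 0 k))"
  let ?off = "\<lambda>k. min (nrm (blk I A k (nblocks I) 0 k)) (nrm (blk I A 0 k k (nblocks I)))"
  have "matrix_norm_family nrm" using assms(1) unfolding dimension_invariant_def by simp
  note nonneg = matrix_norm_nonneg[OF this]
  have p: "0 < I ! k" "I ! k < n" if "k \<in> ?S" for k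
    using that blocking_nth(3)[OF assms(4), of 0 k] blocking_nth(3)[OF assms(4), of k "nblocks I"]
    unfolding blocking_nth(1,2)[OF assms(4)] by auto
  have blocks: "blk I A 0 k 0 k = subm A 0 (I ! k) 0 (I ! k)"
    "blk I A k (nblocks I) 0 k = subm A (I ! k) n 0 (I ! k)"
    "blk I A 0 k k (nblocks I) = subm A 0 (I ! k) (I ! k) n" for k
    unfolding blk_def blocking_nth(1,2)[OF assms(4)] by simp_all
  have off_le: "?off k \<le> nrm A" if "k \<in> ?S" for k
    using norm_quadrants_le(2)[OF assms(1,3) p[OF that] p[OF that]] unfolding blocks by simp
  have "growth_factor nrm I A \<le> 1 + Max (insert 0 ((\<lambda>k. ?inv k * ?off k) ` ?S))"
    using nonneg blocking_nblocks_ge_1[OF assms(4)]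
  proof (rule growth_factor_le)
    fix k assume "k \<in> ?S"
    then show "nrm (schur I A k) \<le> nrm A * (1 + ?inv k * ?off k)"
      using schur_eq_schur_compl[OF assms(3-5)] norm_schur_compl_le[OF assms(1-3) p] unfolding blocks
      by simp
  qed
  moreover have "Max (insert 0 ((\<lambda>k. ?inv k * ?off k) ` ?S)) \<le> Max (insert 0 ((\<lambda>k. ?inv k * nrm A) ` ?S))"
    using off_le by (intro Max_insert_image_mono) (auto intro: mult_left_mono nonneg)
  ultimately show ?thesis by simp
qed

end
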